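(* Let $n\in\mathbb{N}$, $H\in\mathbb{R}^{n\times n}$, $W\succ 0$ in $\mathbb{R}^{n\times n}$, and $C=\mathrm{diag}(C_{11},\dots,C_{nn})$ diagonal with all $C_{ii}\ne 0$; assume $(H,C)$ observable and $(H,D)$ controllable where $W=DD^T$. Let $\Delta>0$ (the $\ell_2$-sensitivity $\Delta_{\ell_2}y$), let $\delta\in[10^{-5},10^{-1}]$, let $\epsilon>0$, and set $$\sigma=\frac{\Delta}{2\epsilon}\Big(K_\delta+\sqrt{K_\delta^2+2\epsilon}\Big),\qquad K_\delta:=\mathcal Q^{-1}(\delta),$$ and $V=\sigma^2 I_n$. Let $\Sigma$ be the unique positive semidefinite solution of $\Sigma = H\Sigma H^T - H\Sigma C^T(C\Sigma C^T+V)^{-1}C\Sigma H^T + W$. Let $B_l,B_u$ satisfy $\mathrm{tr}\,W<B_l<\mathrm{tr}\,W+\mathrm{tr}(H^TH)\lambda_n(W)$ and $B_u>\mathrm{tr}\,W$, and define $$\eta_1:=\left(\frac{(B_l-\mathrm{tr}\,W)\,\lambda_n(W)\,C_u^2}{\Delta^2\big(\mathrm{tr}(H^TH)\lambda_n(W)-B_l+\mathrm{tr}\,W\big)}\right)^{1/2},\qquad \eta_3:=\left(\frac{(B_u-\mathrm{tr}\,W)\,C_l^2}{\Delta^2\,\mathrm{tr}(H^TH)}\right)^{1/2}.$$ If $$\frac18\left(\frac{1+\sqrt{36\eta_3+1}}{\eta_3}\right)^2\le\epsilon,$$ then $\mathrm{tr}\,\Sigma\le B_u$; and if $\epsilon\le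 1/\eta_1$, then $\mathrm{tr}\,\Sigma\ge B_l$. In particular, if both inequalities on $\epsilon$ hold, then $B_l\le\mathrm{tr}\,\Sigma\le B_u$.
   Context: $\mathcal Q(y)=\frac{1}{\sqrt{2\pi}}\int_y^\infty e^{-z^2/2}\,dz$ is the Gaussian tail function and $\mathcal Q^{-1}$ its inverse. The noise level $\sigma$ is the Gaussian-mechanism noise giving $(\epsilon,\delta)$-differential privacy of the state trajectory when $\Delta$ is the sensitivity $\Delta_{\ell_2}y=\sup\{\|Cx-Cx'\|_{\ell_2}:\|x-x'\|_{\ell_2}\le B\}$; for the claim, $\Delta$ may be any positive constant. $\mathrm{tr}\,\Sigma$ is the steady-state mean squared a priori (prediction) error of the Kalman filter. $\lambda_n(W)$ is the smallest eigenvalue of $W$. $C_l:=C_{ll}$ with $l=\arg\min_i C_{ii}^2$ and $C_u:=C_{uu}$ with $u=\arg\max_i C_{ii}^2$. *)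

theory Defs
  imports "HOL-Analysis.Analysis"
begin

definition Qfun :: "real \<Rightarrow> real" where
  "Qfun y = (1 / sqrt (2 * pi)) * integral {y..} (\<lambda>z. exp (- (z\<^sup>2) / 2))"

definition Qinv :: "real \<Rightarrow> real" where
  "Qinv d = (THE y. Qfun y = d)"

primrec mpow :: "real^'n^'n \<Rightarrow> nat \<Rightarrow> real^'n^'n" where
  "mpow A 0 = mat 1"
| "mpow A (Suc k) = A ** mpow A k"

text \<open>Kalman rank conditions: the controllability matrix [D, HD, ..., H^(n-1) D]
  has rank n (its columns span R^n); the observability matrix
  [C; CH; ...; C H^(n-1)] has rank n (its rows span R^n).\<close>
definition controllable :: "real^'n^'n \<Rightarrow> real^'m^'n \<Rightarrow> bool" where
  "controllable H D \<longleftrightarrow>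
     span {column j (mpow H k ** D) | k j. k < CARD('n)} = UNIV"

definition observable :: "real^'n^'n \<Rightarrow> real^'n^'p \<Rightarrow> bool" where
  "observable H C \<longleftrightarrow>
     span {row i (C ** mpow H k) | k i. k < CARD('n)} = UNIV"

definition sym_mat :: "real^'n^'n \<Rightarrow> bool" where
  "sym_mat A \<longleftrightarrow> transpose A = A"

definition pos_def :: "real^'n^'n \<Rightarrow> bool" where
  "pos_def A \<longleftrightarrow> sym_mat A \<and> (\<forall>x. x \<noteq> 0 \<longrightarrow> x \<bullet> (A *v x) > 0)"

definition pos_semidef :: "real^'n^'n \<Rightarrow> bool" where
  "pos_semidef A \<longleftrightarrow> sym_mat A \<and> (\<forall>x. x \<bullet> (A *v x) \<ge> 0)"

definition min_eig :: "real^'n^'n \<Rightarrow> real" where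
  "min_eig A = Min {l. \<exists>v. v \<noteq> 0 \<and> A *v v = l *s v}"

definition diagonal_mat :: "real^'n^'n \<Rightarrow> bool" where
  "diagonal_mat A \<longleftrightarrow> (\<forall>i j. i \<noteq> j \<longrightarrow> A $ i $ j = 0)"

definition C_low :: "real^'n^'n \<Rightarrow> real" where
  "C_low C = C $ (arg_min (\<lambda>i. (C $ i $ i)\<^sup>2) (\<lambda>_. True)) $ (arg_min (\<lambda>i. (C $ i $ i)\<^sup>2) (\<lambda>_. True))"

definition C_up :: "real^'n^'n \<Rightarrow> real" where
  "C_up C = C $ (arg_max (\<lambda>i. (C $ i $ i)\<^sup>2) (\<lambda>_. True)) $ (arg_max (\<lambda>i. (C $ i $ i)\<^sup>2) (\<lambda>_. True))"

definition dare :: "real^'n^'n \<Rightarrow> real^'n^'n \<Rightarrow> real^'n^'n \<Rightarrow> real^'n^'n \<Rightarrow> real^'n^'n \<Rightarrow> bool" where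
  "dare H C V W S \<longleftrightarrow>
     S = H ** S ** transpose H
         - H ** S ** transpose C ** matrix_inv (C ** S ** transpose C + V) ** C ** S ** transpose H
         + W"

end

theory Submission
  imports Defs
begin

text \<open>
  Writing \<open>s = \<sigma>\<^sup>2\<close>, the Riccati equation says \<open>x\<^sup>T \<Sigma> x = p(H\<^sup>T x) + x\<^sup>T W x\<close>, where
  \<open>p(y) = y\<^sup>T \<Sigma> y - y\<^sup>T \<Sigma> C\<^sup>T (C \<Sigma> C\<^sup>T + s I)\<^sup>-\<^sup>1 C \<Sigma> y\<close> is the a posteriori variance in
  direction \<open>y\<close>. Completing the square shows that \<open>p(y)\<close> is the minimum over \<open>k\<close> of
  \<open>(y - C\<^sup>T k)\<^sup>T \<Sigma> (y - C\<^sup>T k) + s |k|\<^sup>2\<close>. Choosing \<open>C\<^sup>T k = y\<close> gives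
  \<open>p(y) \<le> s |y|\<^sup>2 / C\<^sub>l\<^sup>2\<close>, while \<open>\<Sigma> \<ge> \<lambda>\<^sub>n(W) I\<close> and a coordinatewise minimisation give
  \<open>p(y) \<ge> \<lambda>\<^sub>n(W) s |y|\<^sup>2 / (s + \<lambda>\<^sub>n(W) C\<^sub>u\<^sup>2)\<close>. Summing over the rows of \<open>H\<close> bounds
  \<open>tr \<Sigma> - tr W\<close> above and below by increasing functions of \<open>s\<close> times \<open>tr(H\<^sup>T H)\<close>.
  Finally \<open>1 \<le> K\<^sub>\<delta> \<le> 9/2\<close> for \<open>\<delta> \<in> [10\<^sup>-\<^sup>5, 10\<^sup>-\<^sup>1]\<close>, so the two conditions on \<open>\<epsilon>\<close>
  give \<open>\<sigma> \<le> \<Delta> \<eta>\<^sub>3\<close> and \<open>\<sigma> \<ge> \<Delta> / \<epsilon> \<ge> \<Delta> \<eta>\<^sub>1\<close>, which are exactly the noise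
  levels at which these bounds reach \<open>B\<^sub>u\<close> and \<open>B\<^sub>l\<close>.
\<close>

section \<open>The Gaussian tail function\<close>

definition gauss_kernel :: "real \<Rightarrow> real" where
  "gauss_kernel z = exp (- (z\<^sup>2) / 2)"

lemma Qfun_eq_integral_gauss_kernel: "Qfun y = integral {y..} gauss_kernel / sqrt (2 * pi)"
  unfolding Qfun_def gauss_kernel_def[abs_def] by simp

lemma gauss_kernel_pos: "gauss_kernel z > 0"
  by (simp add: gauss_kernel_def)

lemma gauss_kernel_antimono: "0 \<le> z \<Longrightarrow> z \<le> r \<Longrightarrow> gauss_kernel r \<le> gauss_kernel z"
  by (simp add: gauss_kernel_def power_mono)

lemma gauss_kernel_le_exp_linear: "gauss_kernel z \<le> exp (t\<^sup>2 / 2) * exp (- t * z)"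
proof -
  have "- (z\<^sup>2) / 2 \<le> t\<^sup>2 / 2 + (- t * z)"
    using zero_le_power2[of "z - t"] by (simp add: power2_eq_square algebra_simps)
  then show ?thesis by (simp add: gauss_kernel_def flip: exp_add)
qed

lemma gauss_kernel_integrable_interval: "gauss_kernel integrable_on {a..b}"
  unfolding gauss_kernel_def by (intro integrable_continuous_interval continuous_intros) auto

lemma gauss_kernel_integrable_ray: "gauss_kernel integrable_on {a..}"
proof (rule integrable_on_all_intervals_integrable_bound[where g = "\<lambda>z. exp (1/2) * exp (- 1 * z)"])
  fix u v :: real
  have "{a..} \<inter> cbox u v = {max a u..v}" by auto
  then show "(\<lambda>x. if x \<in> {a..} then gauss_kernel x else 0) integrable_on cbox u v"
    using integrable_restrict_Int gauss_kernel_integrable_interval by metis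
next
  show "norm (gauss_kernel x) \<le> exp (1/2) * exp (- 1 * x)" for x
    using gauss_kernel_le_exp_linear[of x 1] gauss_kernel_pos[of x] by simp
next
  show "(\<lambda>z. exp (1/2) * exp (- 1 * z)) integrable_on {a..}"
    using integrable_on_exp_minus_to_infinity[of 1 a] by simp
qed

lemma gauss_kernel_integral_split:
  assumes "a \<le> b"
  shows "integral {a..} gauss_kernel = integral {a..b} gauss_kernel + integral {b..} gauss_kernel"
proof -
  have "{a..} = {a..b} \<union> {b..}" "{a..b} \<inter> {b..} = {b}" using assms by auto
  then show ?thesis
    using integral_Un[OF gauss_kernel_integrable_interval gauss_kernel_integrable_ray, of a b b]
    by simp
qed

lemma gauss_kernel_integral_ge_const:
  assumes "a \<le> b" "\<And>z. z \<in> {a..b} \<Longrightarrow> c \<le> gauss_kernel z"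
  shows "(b - a) * c \<le> integral {a..b} gauss_kernel"
proof -
  have "integral {a..b} (\<lambda>_. c) \<le> integral {a..b} gauss_kernel"
    using assms gauss_kernel_integrable_interval by (intro integral_le) auto
  then show ?thesis using assms by simp
qed

lemma gauss_kernel_integral_pos:
  assumes "a < b"
  shows "integral {a..b} gauss_kernel > 0"
proof -
  have "exp (- (a\<^sup>2 + b\<^sup>2) / 2) \<le> gauss_kernel z" if "z \<in> {a..b}" for z
  proof -
    have "z\<^sup>2 \<le> a\<^sup>2 \<or> z\<^sup>2 \<le> b\<^sup>2"
      using that power_mono[of z b 2] power_mono[of "- z" "- a" 2] by (cases "z \<ge> 0") auto
    then have "z\<^sup>2 \<le> a\<^sup>2 + b\<^sup>2" by (auto intro: add_increasing add_increasing2)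
    then show ?thesis by (simp add: gauss_kernel_def)
  qed
  then have "(b - a) * exp (- (a\<^sup>2 + b\<^sup>2) / 2) \<le> integral {a..b} gauss_kernel"
    using assms by (intro gauss_kernel_integral_ge_const) auto
  moreover have "(b - a) * exp (- (a\<^sup>2 + b\<^sup>2) / 2) > 0" using assms by simp
  ultimately show ?thesis by linarith
qed

lemma Qfun_strict_antimono: "a < b \<Longrightarrow> Qfun b < Qfun a"
  using gauss_kernel_integral_split[of a b] gauss_kernel_integral_pos[of a b]
  by (simp add: Qfun_eq_integral_gauss_kernel divide_strict_right_mono)

lemma continuous_on_Qfun: "continuous_on {a..b} Qfun"
proof -
  have "continuous_on {a..b} (\<lambda>y. (integral {a..} gauss_kernel - integral {a..y} gauss_kernel) / sqrt (2 * pi))"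
    by (intro continuous_intros indefinite_integral_continuous_1 gauss_kernel_integrable_interval) simp
  moreover have "(integral {a..} gauss_kernel - integral {a..y} gauss_kernel) / sqrt (2 * pi) = Qfun y"
    if "y \<in> {a..b}" for y
    using that gauss_kernel_integral_split[of a y] by (simp add: Qfun_eq_integral_gauss_kernel)
  ultimately show ?thesis by (rule continuous_on_eq)
qed

lemma Qinv_Qfun: "Qinv (Qfun x) = x"
  unfolding Qinv_def
proof (rule the_equality)
  show "y = x" if "Qfun y = Qfun x" for y
    using that Qfun_strict_antimono[of x y] Qfun_strict_antimono[of y x] by (cases x y rule: linorder_cases) auto
qed simp

text \<open>A lower Riemann sum on [1, 2] with step 1/4, using exp(-x) \<ge> (1 - x/8)^8.\<close>
lemma Qfun_one_gt: "Qfun 1 > 1/10"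
proof -
  have piece: "m / 4 \<le> integral {b - 1/4..b} gauss_kernel"
    if "5/4 \<le> b" "b \<le> 2" "m \<le> (1 - b\<^sup>2 / 16) ^ 8" for b m :: real
  proof -
    have "b\<^sup>2 \<le> 2\<^sup>2" using that by (intro power_mono) auto
    then have "m \<le> gauss_kernel b"
      using exp_ge_one_minus_x_over_n_power_n[of "b\<^sup>2 / 2" 8] that(3) by (simp add: gauss_kernel_def)
    moreover have "gauss_kernel b \<le> gauss_kernel z" if "z \<in> {b - 1/4..b}" for z
      using that \<open>5/4 \<le> b\<close> by (intro gauss_kernel_antimono) auto
    ultimately have "(b - (b - 1/4)) * m \<le> integral {b - 1/4..b} gauss_kernel"
      by (intro gauss_kernel_integral_ge_const) (auto intro: order_trans)
    then show ?thesis by simp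
  qed
  have combine: "integral {a..c} gauss_kernel = integral {a..b} gauss_kernel + integral {b..c} gauss_kernel"
    if "a \<le> b" "b \<le> c" for a b c :: real
    using Henstock_Kurzweil_Integration.integral_combine[OF that gauss_kernel_integrable_interval]
    by simp
  have "integral {1..} gauss_kernel = integral {1..5/4} gauss_kernel + integral {5/4..3/2} gauss_kernel
      + integral {3/2..7/4} gauss_kernel + integral {7/4..2} gauss_kernel + integral {2..} gauss_kernel"
    using gauss_kernel_integral_split[of 1 2] combine[of 1 "5/4" 2] combine[of "5/4" "3/2" 2]
      combine[of "3/2" "7/4" 2] by simp
  moreover have "integral {2..} gauss_kernel \<ge> 0"
    using gauss_kernel_pos by (intro integral_nonneg gauss_kernel_integrable_ray less_imp_le)
  moreover have "439/4000 \<le> integral {1..5/4} gauss_kernel" "297/4000 \<le> integral {5/4..3/2} gauss_kernel"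
    "182/4000 \<le> integral {3/2..7/4} gauss_kernel" "100/4000 \<le> integral {7/4..2} gauss_kernel"
    using piece[of "5/4" "439/1000"] piece[of "3/2" "297/1000"] piece[of "7/4" "182/1000"]
      piece[of 2 "100/1000"] by (simp_all add: power_divide)
  ultimately have "integral {1..} gauss_kernel > 251/1000" by linarith
  moreover have "sqrt (2 * pi) \<le> 251/100"
    using pi_approx by (intro real_le_lsqrt) (simp_all add: power2_eq_square)
  ultimately show ?thesis
    unfolding Qfun_eq_integral_gauss_kernel by (simp add: field_simps)
qed

lemma Qfun_nine_halves_lt: "Qfun (9/2) < 1/100000"
proof -
  let ?g = "\<lambda>z::real. exp ((9/2::real)\<^sup>2/2) * exp (- (9/2) * z)"
  have g: "(?g has_integral exp ((9/2::real)\<^sup>2/2) * (exp (- (9/2) * (9/2)) / (9/2))) {9/2..}"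
    by (intro has_integral_mult_right has_integral_exp_minus_to_infinity) simp
  have "integral {9/2..} gauss_kernel \<le> integral {9/2..} ?g"
    using g gauss_kernel_le_exp_linear gauss_kernel_integrable_ray
    by (intro integral_le) blast+
  also have "\<dots> = (2/9) / exp (81/8)"
    using g by (simp add: integral_unique power2_eq_square exp_minus[symmetric] exp_add[symmetric] field_simps)
  also have "\<dots> < (2/9) / 8900"
  proof -
    have "(8900::real) < (1 + 10 / 80) ^ 80" by (simp add: power_divide)
    also have "\<dots> \<le> exp 10" using exp_ge_one_plus_x_over_n_power_n[of 80 10] by simp
    also have "\<dots> \<le> exp (81/8)" by simp
    finally show ?thesis by (intro divide_strict_left_mono) auto
  qed
  finally have "integral {9/2..} gauss_kernel < 1/40000" by simp
  moreover have "sqrt (2 * pi) \<ge> 5/2"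
    by (rule real_le_rsqrt) (use pi_approx in \<open>simp add: power2_eq_square\<close>)
  ultimately show ?thesis
    unfolding Qfun_eq_integral_gauss_kernel by (simp add: field_simps)
qed

lemma Qinv_bounds:
  assumes "1/100000 \<le> d" "d \<le> 1/10"
  shows "1 \<le> Qinv d" "Qinv d \<le> 9/2"
proof -
  obtain x where "1 \<le> x" "x \<le> 9/2" "Qfun x = d"
    using IVT2'[of Qfun "9/2" d 1, OF _ _ _ continuous_on_Qfun] Qfun_one_gt Qfun_nine_halves_lt assms
    by auto
  then show "1 \<le> Qinv d" "Qinv d \<le> 9/2" using Qinv_Qfun by auto
qed

section \<open>Symmetric matrices and the smallest eigenvalue\<close>

lemma inner_matrix_transpose: "(x::real^'m) \<bullet> ((A::real^'n^'m) *v y) = (transpose A *v x) \<bullet> y"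
  by (simp add: dot_lmul_matrix)

lemma sym_mat_inner_commute: "sym_mat A \<Longrightarrow> (x::real^'n) \<bullet> (A *v y) = (A *v x) \<bullet> y"
  using inner_matrix_transpose[of x A y] by (simp add: sym_mat_def)

lemma sym_mat_eigenvalues_finite:
  fixes W :: "real^'n^'n"
  assumes sym: "sym_mat W"
  shows "finite {l. \<exists>v. v \<noteq> 0 \<and> W *v v = l *s v}"
proof -
  define L where "L = {l. \<exists>v. v \<noteq> 0 \<and> W *v v = l *s v}"
  define ev where "ev l = (SOME v. v \<noteq> 0 \<and> W *v v = l *\<^sub>R v)" for l
  have ev: "ev l \<noteq> 0 \<and> W *v ev l = l *\<^sub>R ev l" if "l \<in> L" for l
    unfolding ev_def by (rule someI_ex) (use that in \<open>auto simp: L_def scalar_mult_eq_scaleR\<close>)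
  have orth: "ev l1 \<bullet> ev l2 = 0" if "l1 \<in> L" "l2 \<in> L" "l1 \<noteq> l2" for l1 l2
  proof -
    have "l1 * (ev l1 \<bullet> ev l2) = l2 * (ev l1 \<bullet> ev l2)"
      using sym_mat_inner_commute[OF sym, of "ev l1" "ev l2"] ev[OF that(1)] ev[OF that(2)] by auto
    then show ?thesis using that(3) by auto
  qed
  have "inj_on ev L"
    by (rule inj_onI) (metis ev inner_eq_zero_iff orth)
  moreover have "independent (ev ` L)"
    by (rule pairwise_orthogonal_independent)
      (use ev orth in \<open>force simp: pairwise_def orthogonal_def\<close>)+
  then have "finite (ev ` L)" using independent_bound by blast
  ultimately show ?thesis unfolding L_def[symmetric] by (rule finite_imageD[rotated])
qed

lemma rayleigh_minimizer_eigenvector: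
  fixes W :: "real^'n^'n"
  assumes sym: "sym_mat W"
    and lower: "\<And>x. \<mu> * (x \<bullet> x) \<le> x \<bullet> (W *v x)"
    and attained: "x0 \<bullet> (W *v x0) = \<mu> * (x0 \<bullet> x0)"
  shows "W *v x0 = \<mu> *\<^sub>R x0"
proof -
  define r where "r = W *v x0 - \<mu> *\<^sub>R x0"
  define b where "b = r \<bullet> r"
  define c where "c = r \<bullet> (W *v r) - \<mu> * (r \<bullet> r)"
  have c: "c \<ge> 0" using lower[of r] by (simp add: c_def)
  \<comment> \<open>\<open>x \<bullet> W x - \<mu> x \<bullet> x\<close> is nonnegative and vanishes at \<open>x0\<close>, so its linear
    coefficient \<open>-2 b\<close> along \<open>r\<close> must vanish\<close>
  have "0 \<le> - 2 * t * b + t\<^sup>2 * c" for t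
  proof -
    have "x0 \<bullet> (W *v r) = (W *v x0) \<bullet> r" by (rule sym_mat_inner_commute[OF sym])
    then have "(x0 - t *\<^sub>R r) \<bullet> (W *v (x0 - t *\<^sub>R r)) - \<mu> * ((x0 - t *\<^sub>R r) \<bullet> (x0 - t *\<^sub>R r))
        = - 2 * t * b + t\<^sup>2 * c"
      using attained
      by (simp add: b_def c_def r_def matrix_vector_mult_diff_distrib matrix_vector_mult_scaleR
          inner_diff_left inner_diff_right inner_commute power2_eq_square algebra_simps)
    then show ?thesis using lower[of "x0 - t *\<^sub>R r"] by linarith
  qed
  moreover have "- 2 * (b / (c + 1)) * b + (b / (c + 1))\<^sup>2 * c = - (b\<^sup>2 * (c + 2)) / (c + 1)\<^sup>2"
    using c by (simp add: divide_simps power2_eq_square) (simp add: algebra_simps)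
  ultimately have "0 \<le> - (b\<^sup>2 * (c + 2)) / (c + 1)\<^sup>2" by metis
  then have "b\<^sup>2 * (c + 2) \<le> 0"
    using c by (simp add: divide_le_0_iff)
  then have "b = 0" using c by (simp add: mult_le_0_iff)
  then show ?thesis by (simp add: b_def r_def)
qed

lemma sym_mat_rayleigh_min_eigenvalue:
  fixes W :: "real^'n^'n"
  assumes sym: "sym_mat W"
  obtains \<mu> v where "v \<noteq> 0" "W *v v = \<mu> *s v" "\<And>x. \<mu> * (x \<bullet> x) \<le> x \<bullet> (W *v x)"
proof -
  let ?S = "sphere (0::real^'n) 1"
  have "continuous_on ?S (\<lambda>x. x \<bullet> (W *v x))" by (intro continuous_intros)
  then obtain x0 where x0: "x0 \<in> ?S" "\<And>y. y \<in> ?S \<Longrightarrow> x0 \<bullet> (W *v x0) \<le> y \<bullet> (W *v y)"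
    using continuous_attains_inf[of ?S] by fastforce
  define \<mu> where "\<mu> = x0 \<bullet> (W *v x0)"
  have unit: "x0 \<bullet> x0 = 1" using x0(1) by (simp add: dot_square_norm)
  have lower: "\<mu> * (x \<bullet> x) \<le> x \<bullet> (W *v x)" for x
  proof (cases "x = 0")
    case False
    then have "\<mu> \<le> (x /\<^sub>R norm x) \<bullet> (W *v (x /\<^sub>R norm x))"
      unfolding \<mu>_def by (intro x0(2)) simp
    also have "\<dots> = (x \<bullet> (W *v x)) / (norm x)\<^sup>2"
      using False by (simp add: matrix_vector_mult_scaleR power2_eq_square field_simps)
    finally show ?thesis using False by (simp add: field_simps dot_square_norm)
  qed simp
  have "W *v x0 = \<mu> *\<^sub>R x0"
    by (rule rayleigh_minimizer_eigenvector[OF sym lower]) (simp add: \<mu>_def unit)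
  moreover have "x0 \<noteq> 0" using unit by auto
  ultimately show ?thesis using that lower by (simp add: scalar_mult_eq_scaleR)
qed

lemma min_eig_le_rayleigh:
  fixes W :: "real^'n^'n"
  assumes "sym_mat W"
  shows "min_eig W * (x \<bullet> x) \<le> x \<bullet> (W *v x)"
proof -
  obtain \<mu> v where v: "v \<noteq> 0" "W *v v = \<mu> *s v" and \<mu>: "\<And>x. \<mu> * (x \<bullet> x) \<le> x \<bullet> (W *v x)"
    using sym_mat_rayleigh_min_eigenvalue[OF assms] by blast
  have "min_eig W \<le> \<mu>"
    unfolding min_eig_def using v by (intro Min_le sym_mat_eigenvalues_finite[OF assms]) auto
  then have "min_eig W * (x \<bullet> x) \<le> \<mu> * (x \<bullet> x)" by (simp add: mult_right_mono)
  with \<mu>[of x] show ?thesis by linarith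
qed

section \<open>The Riccati equation as a posterior variance\<close>

definition innovation_cov :: "real^'n^'p \<Rightarrow> real^'n^'n \<Rightarrow> real \<Rightarrow> real^'p^'p" where
  "innovation_cov C S s = C ** S ** transpose C + s *\<^sub>R mat 1"

definition posterior_form :: "real^'n^'p \<Rightarrow> real^'n^'n \<Rightarrow> real \<Rightarrow> real^'n \<Rightarrow> real" where
  "posterior_form C S s y = y \<bullet> (S *v y)
     - (C *v (S *v y)) \<bullet> (matrix_inv (innovation_cov C S s) *v (C *v (S *v y)))"

definition estimation_cost :: "real^'n^'p \<Rightarrow> real^'n^'n \<Rightarrow> real \<Rightarrow> real^'n \<Rightarrow> real^'p \<Rightarrow> real" where
  "estimation_cost C S s y k = (y - transpose C *v k) \<bullet> (S *v (y - transpose C *v k)) + s * (k \<bullet> k)"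

lemma innovation_cov_mult_vector:
  "innovation_cov C S s *v k = C *v (S *v (transpose C *v k)) + s *\<^sub>R k"
  unfolding innovation_cov_def
  by (simp add: matrix_vector_mult_add_rdistrib matrix_vector_mul_assoc[symmetric]
      scaleR_matrix_vector_assoc[symmetric])

lemma innovation_cov_form:
  "k \<bullet> (innovation_cov C S s *v k) = (transpose C *v k) \<bullet> (S *v (transpose C *v k)) + s * (k \<bullet> k)"
  by (simp add: innovation_cov_mult_vector inner_add_right inner_matrix_transpose)

lemma innovation_cov_inner_commute:
  assumes "sym_mat S"
  shows "x \<bullet> (innovation_cov C S s *v y) = (innovation_cov C S s *v x) \<bullet> y"
proof -
  have "x \<bullet> (C *v (S *v (transpose C *v y))) = (transpose C *v x) \<bullet> (S *v (transpose C *v y))"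
    by (rule inner_matrix_transpose)
  also have "\<dots> = (S *v (transpose C *v x)) \<bullet> (transpose C *v y)"
    by (rule sym_mat_inner_commute[OF assms])
  also have "\<dots> = (C *v (S *v (transpose C *v x))) \<bullet> y"
    by (metis inner_commute inner_matrix_transpose)
  finally show ?thesis
    by (simp add: innovation_cov_mult_vector inner_add_left inner_add_right inner_commute)
qed

lemma innovation_cov_right_inverse:
  assumes S: "pos_semidef S" and s: "s > 0"
  shows "innovation_cov C S s ** matrix_inv (innovation_cov C S s) = mat 1"
proof -
  let ?M = "innovation_cov C S s"
  have "x = 0" if "?M *v x = 0" for x
  proof -
    have "(transpose C *v x) \<bullet> (S *v (transpose C *v x)) + s * (x \<bullet> x) = 0"
      using that innovation_cov_form[of x C S s] by simp
    moreover have "(transpose C *v x) \<bullet> (S *v (transpose C *v x)) \<ge> 0"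
      using S by (simp add: pos_semidef_def)
    ultimately show "x = 0" using s by (simp add: add_nonneg_eq_0_iff)
  qed
  then have "invertible ?M"
    using invertible_left_inverse matrix_left_invertible_ker by blast
  then show ?thesis
    unfolding matrix_inv_def invertible_def by (rule someI2_ex) simp
qed

lemma estimation_cost_expand:
  assumes "sym_mat S"
  shows "estimation_cost C S s y k
    = y \<bullet> (S *v y) - 2 * ((C *v (S *v y)) \<bullet> k) + k \<bullet> (innovation_cov C S s *v k)"
proof -
  let ?u = "transpose C *v k"
  have cross: "y \<bullet> (S *v ?u) = (C *v (S *v y)) \<bullet> k" "?u \<bullet> (S *v y) = (C *v (S *v y)) \<bullet> k"
    by (metis inner_commute inner_matrix_transpose sym_mat_inner_commute[OF assms])+
  have "estimation_cost C S s y k = y \<bullet> (S *v y) - y \<bullet> (S *v ?u) - ?u \<bullet> (S *v y)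
      + (?u \<bullet> (S *v ?u) + s * (k \<bullet> k))"
    by (simp only: estimation_cost_def matrix_vector_mult_diff_distrib inner_diff_left inner_diff_right)
  then show ?thesis
    by (simp only: cross innovation_cov_form)
qed

lemma innovation_cov_nonneg:
  assumes "pos_semidef S" "s \<ge> 0"
  shows "k \<bullet> (innovation_cov C S s *v k) \<ge> 0"
  using assms by (simp add: innovation_cov_form pos_semidef_def)

lemma estimation_cost_nonneg:
  assumes "pos_semidef S" "s \<ge> 0"
  shows "estimation_cost C S s y k \<ge> 0"
  using assms by (simp add: estimation_cost_def pos_semidef_def)

lemma estimation_cost_complete_square:
  fixes C :: "real^'n^'p" and y :: "real^'n"
  assumes S: "pos_semidef S" and s: "s > 0"
  defines "k0 \<equiv> matrix_inv (innovation_cov C S s) *v (C *v (S *v y))"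
  shows "estimation_cost C S s y k
    = posterior_form C S s y + (k - k0) \<bullet> (innovation_cov C S s *v (k - k0))"
proof -
  let ?M = "innovation_cov C S s"
  have sym: "sym_mat S" using S by (simp add: pos_semidef_def)
  have "?M *v (matrix_inv ?M *v v) = v" for v
    by (simp add: matrix_vector_mul_assoc innovation_cov_right_inverse[OF S s])
  then have Mk0: "?M *v k0 = C *v (S *v y)"
    unfolding k0_def .
  have "posterior_form C S s y = y \<bullet> (S *v y) - (C *v (S *v y)) \<bullet> k0"
    unfolding posterior_form_def k0_def ..
  moreover have "(k - k0) \<bullet> (?M *v (k - k0))
      = k \<bullet> (?M *v k) - 2 * ((?M *v k0) \<bullet> k) + (?M *v k0) \<bullet> k0"
    using innovation_cov_inner_commute[OF sym, of k0 C s k]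
    by (simp add: matrix_vector_mult_diff_distrib inner_diff_left inner_diff_right inner_commute)
  ultimately show ?thesis
    unfolding estimation_cost_expand[OF sym] Mk0 by (simp add: inner_commute)
qed

lemma posterior_form_le_estimation_cost:
  assumes "pos_semidef S" "s > 0"
  shows "posterior_form C S s y \<le> estimation_cost C S s y k"
  using estimation_cost_complete_square[OF assms] innovation_cov_nonneg[OF assms(1)] assms(2)
  by (metis le_add_same_cancel1 less_imp_le)

lemma posterior_form_eq_estimation_cost:
  assumes "pos_semidef S" "s > 0"
  shows "posterior_form C S s y
    = estimation_cost C S s y (matrix_inv (innovation_cov C S s) *v (C *v (S *v y)))"
  using estimation_cost_complete_square[OF assms, where k = "matrix_inv (innovation_cov C S s) *v (C *v (S *v y))"]
  by simp

lemma posterior_form_nonneg: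
  assumes "pos_semidef S" "s > 0"
  shows "posterior_form C S s y \<ge> 0"
  unfolding posterior_form_eq_estimation_cost[OF assms]
  by (rule estimation_cost_nonneg[OF assms(1) less_imp_le[OF assms(2)]])

lemma posterior_form_le:
  assumes "pos_semidef S" "s > 0" "transpose C *v w = y"
  shows "posterior_form C S s y \<le> s * (w \<bullet> w)"
  using posterior_form_le_estimation_cost[OF assms(1,2), of C y w] assms(3)
  by (simp add: estimation_cost_def)

lemma diagonal_mat_mult_vector:
  fixes A :: "real^'n^'n"
  assumes "diagonal_mat A"
  shows "A *v x = (\<chi> i. A$i$i * x$i)"
proof -
  have "(\<Sum>j\<in>UNIV. A$i$j * x$j) = (\<Sum>j\<in>UNIV. if j = i then A$i$i * x$i else 0)" for i
    by (rule sum.cong) (use assms in \<open>auto simp: diagonal_mat_def\<close>)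
  then show ?thesis by (simp add: vec_eq_iff matrix_vector_mult_def)
qed

lemma diagonal_mat_transpose: "diagonal_mat A \<Longrightarrow> diagonal_mat (transpose A)"
  by (simp add: diagonal_mat_def transpose_def)

lemma inner_self_eq_sum_squares: "(x::real^'n) \<bullet> x = (\<Sum>i\<in>UNIV. (x$i)\<^sup>2)"
  by (simp add: inner_vec_def power2_eq_square)

lemma weighted_least_squares_bound:
  fixes l s c y k :: real
  assumes "l \<ge> 0" "s > 0"
  shows "l * s * y\<^sup>2 / (s + l * c\<^sup>2) \<le> l * (y - c * k)\<^sup>2 + s * k\<^sup>2"
proof -
  have "(s + l * c\<^sup>2) * (l * (y - c * k)\<^sup>2 + s * k\<^sup>2) - l * s * y\<^sup>2
      = (l * c * y - (s + l * c\<^sup>2) * k)\<^sup>2"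
    by (simp add: power2_eq_square algebra_simps)
  then have "l * s * y\<^sup>2 \<le> (s + l * c\<^sup>2) * (l * (y - c * k)\<^sup>2 + s * k\<^sup>2)"
    by (metis diff_ge_0_iff_ge zero_le_power2)
  moreover have "s + l * c\<^sup>2 > 0" using assms by (simp add: add_pos_nonneg)
  ultimately show ?thesis by (simp add: divide_le_eq mult.commute)
qed

lemma posterior_form_ge_diagonal:
  fixes C S :: "real^'n^'n"
  assumes S: "pos_semidef S" and s: "s > 0" and C: "diagonal_mat C"
    and l: "l \<ge> 0" "\<And>x. l * (x \<bullet> x) \<le> x \<bullet> (S *v x)"
    and c: "\<And>i. (C$i$i)\<^sup>2 \<le> c"
  shows "l * s / (s + l * c) * (y \<bullet> y) \<le> posterior_form C S s y"
proof -
  define k where "k = matrix_inv (innovation_cov C S s) *v (C *v (S *v y))"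
  define r where "r = y - transpose C *v k"
  have r: "r$i = y$i - C$i$i * k$i" for i
    unfolding r_def using diagonal_mat_mult_vector[OF diagonal_mat_transpose[OF C]]
    by (simp add: transpose_def)
  have "l * s / (s + l * c) * (y$i)\<^sup>2 \<le> l * (r$i)\<^sup>2 + s * (k$i)\<^sup>2" for i
  proof -
    have "l * (C$i$i)\<^sup>2 \<le> l * c" using c[of i] l(1) by (rule mult_left_mono)
    moreover have "0 < s + l * (C$i$i)\<^sup>2" using s l(1) by (simp add: add_pos_nonneg)
    ultimately have "l * s * (y$i)\<^sup>2 / (s + l * c) \<le> l * s * (y$i)\<^sup>2 / (s + l * (C$i$i)\<^sup>2)"
      using l(1) s by (intro divide_left_mono) auto
    also have "\<dots> \<le> l * (r$i)\<^sup>2 + s * (k$i)\<^sup>2"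
      unfolding r by (rule weighted_least_squares_bound[OF l(1) s])
    finally show ?thesis by simp
  qed
  then have "l * s / (s + l * c) * (y \<bullet> y) \<le> l * (r \<bullet> r) + s * (k \<bullet> k)"
    unfolding inner_self_eq_sum_squares sum_distrib_left sum.distrib[symmetric] by (rule sum_mono)
  also have "\<dots> \<le> estimation_cost C S s y k"
    using l(2)[of r] by (simp add: estimation_cost_def r_def)
  also have "\<dots> = posterior_form C S s y"
    unfolding k_def by (rule posterior_form_eq_estimation_cost[OF S s, symmetric])
  finally show ?thesis .
qed

lemma dare_quadratic_form:
  fixes H C S W :: "real^'n^'n"
  assumes "dare H C (s *\<^sub>R mat 1) W S" "sym_mat S"
  shows "x \<bullet> (S *v x) = posterior_form C S s (transpose H *v x) + x \<bullet> (W *v x)"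
proof -
  let ?z = "transpose H *v x" and ?Mi = "matrix_inv (innovation_cov C S s)"
  have "S = H ** S ** transpose H - H ** S ** transpose C ** ?Mi ** C ** S ** transpose H + W"
    using assms(1) by (simp add: dare_def innovation_cov_def)
  from arg_cong[where f = "\<lambda>A. x \<bullet> (A *v x)", OF this]
  have "x \<bullet> (S *v x) = x \<bullet> ((H ** S ** transpose H
      - H ** S ** transpose C ** ?Mi ** C ** S ** transpose H + W) *v x)" .
  also have "\<dots> = posterior_form C S s ?z + x \<bullet> (W *v x)"
  proof -
    have gain: "(H ** S ** transpose H) *v x = H *v (S *v ?z)"
      "(H ** S ** transpose C ** ?Mi ** C ** S ** transpose H) *v x
        = H *v (S *v (transpose C *v (?Mi *v (C *v (S *v ?z)))))"
      by (simp_all only: matrix_vector_mul_assoc[symmetric])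
    have left: "x \<bullet> (H *v v) = ?z \<bullet> v" for v
      by (rule inner_matrix_transpose)
    have right: "?z \<bullet> (S *v (transpose C *v m)) = (C *v (S *v ?z)) \<bullet> m" for m
      using sym_mat_inner_commute[OF assms(2)] inner_matrix_transpose[of "S *v ?z" "transpose C" m]
      by simp
    show ?thesis
      by (simp only: matrix_vector_mult_add_rdistrib matrix_vector_mult_diff_rdistrib
          inner_add_right inner_diff_right gain left right posterior_form_def)
  qed
  finally show ?thesis .
qed

lemma dare_trace_eq:
  fixes H C S W :: "real^'n^'n"
  assumes "dare H C (s *\<^sub>R mat 1) W S" "sym_mat S"
  shows "trace S = (\<Sum>i\<in>UNIV. posterior_form C S s (row i H)) + trace W"
proof -
  have diag: "axis i 1 \<bullet> (X *v axis i 1) = X$i$i" for X :: "real^'n^'n" and i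
    by (simp add: matrix_vector_mult_basis inner_axis' column_def)
  have row: "transpose H *v axis i 1 = row i H" for i
    by (simp add: matrix_vector_mult_basis)
  have "S$i$i = posterior_form C S s (row i H) + W$i$i" for i
    using dare_quadratic_form[OF assms, of "axis i 1"] by (simp only: diag row)
  then show ?thesis by (simp add: trace_def sum.distrib)
qed

section \<open>Bounds on the steady-state error\<close>

lemma trace_transpose_mult_self:
  "trace (transpose (H::real^'n^'n) ** H) = (\<Sum>i\<in>UNIV. row i H \<bullet> row i H)"
proof -
  have "trace (transpose H ** H) = trace (H ** transpose H)" by (rule trace_mul_sym)
  then show ?thesis by (simp add: trace_def matrix_mult_transpose_dot_row)
qed

lemma trace_transpose_mult_self_nonneg: "trace (transpose (H::real^'n^'n) ** H) \<ge> 0"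
  unfolding trace_transpose_mult_self by (intro sum_nonneg) simp

lemma dare_trace_le:
  fixes H C S W :: "real^'n^'n"
  assumes dare: "dare H C (s *\<^sub>R mat 1) W S" and S: "pos_semidef S" and s: "s > 0"
    and C: "diagonal_mat C" and c: "c > 0" "\<And>i. c \<le> (C$i$i)\<^sup>2"
  shows "trace S \<le> trace W + s / c * trace (transpose H ** H)"
proof -
  have Cii: "(C$j$j)\<^sup>2 > 0" for j using c(1) c(2)[of j] by linarith
  have "posterior_form C S s (row i H) \<le> s / c * (row i H \<bullet> row i H)" for i
  proof -
    define w where "w = (\<chi> j. row i H $ j / C$j$j)"
    have "transpose C *v w = row i H"
      using diagonal_mat_mult_vector[OF diagonal_mat_transpose[OF C]] Cii
      by (simp add: w_def vec_eq_iff transpose_def)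
    then have "posterior_form C S s (row i H) \<le> s * (w \<bullet> w)"
      by (rule posterior_form_le[OF S s])
    also have "w \<bullet> w = (\<Sum>j\<in>UNIV. (row i H $ j)\<^sup>2 / (C$j$j)\<^sup>2)"
      by (simp add: w_def inner_self_eq_sum_squares power_divide)
    also have "\<dots> \<le> (\<Sum>j\<in>UNIV. (row i H $ j)\<^sup>2 / c)"
      using c(1) c(2) Cii by (intro sum_mono divide_left_mono) auto
    finally show ?thesis
      using s by (simp add: inner_self_eq_sum_squares sum_divide_distrib[symmetric] mult_left_mono)
  qed
  then have "(\<Sum>i\<in>UNIV. posterior_form C S s (row i H)) \<le> s / c * trace (transpose H ** H)"
    unfolding trace_transpose_mult_self sum_distrib_left by (rule sum_mono)
  then show ?thesis
    using dare_trace_eq[OF dare] S by (simp add: pos_semidef_def)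
qed

lemma dare_trace_ge:
  fixes H C S W :: "real^'n^'n"
  assumes dare: "dare H C (s *\<^sub>R mat 1) W S" and S: "pos_semidef S" and s: "s > 0"
    and C: "diagonal_mat C" and c: "\<And>i. (C$i$i)\<^sup>2 \<le> c"
    and l: "l \<ge> 0" "\<And>x. l * (x \<bullet> x) \<le> x \<bullet> (W *v x)"
  shows "trace W + l * s / (s + l * c) * trace (transpose H ** H) \<le> trace S"
proof -
  have S_sym: "sym_mat S" using S by (simp add: pos_semidef_def)
  have "l * (x \<bullet> x) \<le> x \<bullet> (S *v x)" for x
    using l(2)[of x] dare_quadratic_form[OF dare S_sym, of x]
      posterior_form_nonneg[OF S s, of C "transpose H *v x"]
    by linarith
  then have "l * s / (s + l * c) * (row i H \<bullet> row i H) \<le> posterior_form C S s (row i H)" for i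
    by (rule posterior_form_ge_diagonal[OF S s C l(1) _ c])
  then have "l * s / (s + l * c) * trace (transpose H ** H) \<le> (\<Sum>i\<in>UNIV. posterior_form C S s (row i H))"
    unfolding trace_transpose_mult_self sum_distrib_left by (rule sum_mono)
  then show ?thesis
    using dare_trace_eq[OF dare S_sym] by simp
qed

lemma C_up_sq_ge: "((C::real^'n^'n)$i$i)\<^sup>2 \<le> (C_up C)\<^sup>2"
proof -
  define f where "f i = (C$i$i)\<^sup>2" for i
  have "Max (range f) \<in> range f" by (intro Max_in) auto
  then obtain k where "f k = Max (range f)" by (metis imageE)
  then have le: "f x \<le> f k" for x by simp
  then have "f (arg_max f (\<lambda>_. True)) = f k" by (intro arg_max_equality) auto
  then show ?thesis using le[of i] unfolding C_up_def f_def by simp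
qed

lemma C_low_sq_le: "(C_low (C::real^'n^'n))\<^sup>2 \<le> (C$i$i)\<^sup>2"
proof -
  define f where "f i = (C$i$i)\<^sup>2" for i
  have "Min (range f) \<in> range f" by (intro Min_in) auto
  then obtain k where "f k = Min (range f)" by (metis imageE)
  then have le: "f k \<le> f x" for x by simp
  then have "f (arg_min f (\<lambda>_. True)) = f k" by (intro arg_min_equality) auto
  then show ?thesis using le[of i] unfolding C_low_def f_def by simp
qed

lemma C_low_diagonal_entry: "\<exists>j. C_low C = C$j$j"
  unfolding C_low_def by blast

lemma dare_trace_le_of_noise:
  fixes H C S W :: "real^'n^'n"
  assumes dare: "dare H C (s *\<^sub>R mat 1) W S" and S: "pos_semidef S" and s: "s > 0"
    and C: "diagonal_mat C" "\<forall>i. C$i$i \<noteq> 0"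
    and noise: "s * trace (transpose H ** H) \<le> (B - trace W) * (C_low C)\<^sup>2"
  shows "trace S \<le> B"
proof -
  have c: "(C_low C)\<^sup>2 > 0" using C(2) C_low_diagonal_entry[of C] by auto
  have "trace S \<le> trace W + s / (C_low C)\<^sup>2 * trace (transpose H ** H)"
    using c C_low_sq_le by (intro dare_trace_le[OF dare S s C(1)])
  also have "\<dots> \<le> B" using noise c by (simp add: field_simps)
  finally show ?thesis .
qed

lemma dare_trace_ge_of_noise:
  fixes H C S W :: "real^'n^'n"
  assumes dare: "dare H C (s *\<^sub>R mat 1) W S" and S: "pos_semidef S" and s: "s > 0"
    and C: "diagonal_mat C" "\<forall>i. C$i$i \<noteq> 0" and W: "sym_mat W"
    and B: "trace W < B" "B < trace W + trace (transpose H ** H) * min_eig W"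
    and noise: "(B - trace W) * min_eig W * (C_up C)\<^sup>2
      \<le> s * (trace (transpose H ** H) * min_eig W - B + trace W)"
  shows "B \<le> trace S"
proof -
  define T l c where "T = trace (transpose H ** H)" and "l = min_eig W" and "c = (C_up C)\<^sup>2"
  have "T \<ge> 0" unfolding T_def by (rule trace_transpose_mult_self_nonneg)
  then have l: "l > 0" using B unfolding T_def l_def by (smt (verit) mult_nonneg_nonpos)
  have c: "c > 0" unfolding c_def using C(2) C_up_sq_ge
    by (metis order_less_le_trans zero_less_power2)
  have "(B - trace W) * (s + l * c) \<le> l * s * T"
    using noise unfolding T_def l_def c_def by (simp add: algebra_simps)
  moreover have "s + l * c > 0" using s l c by (simp add: add_pos_pos)
  ultimately have "B - trace W \<le> l * s / (s + l * c) * T"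
    by (simp add: pos_le_divide_eq)
  also have "trace W + l * s / (s + l * c) * T \<le> trace S"
    unfolding T_def c_def using C_up_sq_ge l min_eig_le_rayleigh[OF W] unfolding l_def
    by (intro dare_trace_ge[OF dare S s C(1)]) auto
  finally show ?thesis by simp
qed

section \<open>The noise level of the Gaussian mechanism\<close>

lemma gaussian_noise_ge:
  fixes \<Delta> \<epsilon> K :: real
  assumes "\<Delta> > 0" "\<epsilon> > 0" "1 \<le> K"
  shows "\<Delta> / \<epsilon> \<le> \<Delta> / (2 * \<epsilon>) * (K + sqrt (K\<^sup>2 + 2 * \<epsilon>))"
proof -
  have "K \<le> sqrt (K\<^sup>2 + 2 * \<epsilon>)" using assms by (intro real_le_rsqrt) simp
  then have "\<Delta> / (2 * \<epsilon>) * 2 \<le> \<Delta> / (2 * \<epsilon>) * (K + sqrt (K\<^sup>2 + 2 * \<epsilon>))"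
    using assms by (intro mult_left_mono) auto
  then show ?thesis using assms by simp
qed

text \<open>The hypothesis on \<open>\<epsilon>\<close> is the solved form of \<open>9 + t \<le> t\<^sup>2 \<eta>\<close> in \<open>t = sqrt (2 \<epsilon>)\<close>,
  and \<open>K + sqrt (K\<^sup>2 + t\<^sup>2) \<le> 2 K + t \<le> 9 + t\<close>.\<close>
lemma gaussian_noise_le:
  fixes \<Delta> \<epsilon> K \<eta> :: real
  assumes "\<Delta> > 0" "\<epsilon> > 0" "0 \<le> K" "K \<le> 9/2" "\<eta> > 0"
    and eps: "1/8 * ((1 + sqrt (36 * \<eta> + 1)) / \<eta>)\<^sup>2 \<le> \<epsilon>"
  shows "\<Delta> / (2 * \<epsilon>) * (K + sqrt (K\<^sup>2 + 2 * \<epsilon>)) \<le> \<Delta> * \<eta>"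
proof -
  define t where "t = sqrt (2 * \<epsilon>)"
  define R where "R = sqrt (36 * \<eta> + 1)"
  have t: "t > 0" "t\<^sup>2 = 2 * \<epsilon>" using assms(2) by (simp_all add: t_def)
  have R: "R \<ge> 0" "R\<^sup>2 = 36 * \<eta> + 1" using assms(5) by (simp_all add: R_def)
  have "((1 + R) / \<eta>)\<^sup>2 \<le> (2 * t)\<^sup>2" using eps t(2) unfolding R_def by (simp add: power_mult_distrib)
  then have "(1 + R) / \<eta> \<le> 2 * t" by (rule power2_le_imp_le) (use t(1) in simp)
  then have "R \<le> 2 * t * \<eta> - 1" using assms(5) by (simp add: divide_le_eq algebra_simps)
  then have "R\<^sup>2 \<le> (2 * t * \<eta> - 1)\<^sup>2" using R(1) by (intro power_mono) auto
  then have "\<eta> * 9 \<le> \<eta> * (t\<^sup>2 * \<eta> - t)" unfolding R(2) by (simp add: power2_eq_square algebra_simps)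
  then have "9 + t \<le> t\<^sup>2 * \<eta>" using assms(5) by simp
  moreover have "sqrt (K\<^sup>2 + t\<^sup>2) \<le> K + t"
    using assms(3) t(1) by (intro real_le_lsqrt) (simp_all add: power2_eq_square algebra_simps)
  ultimately have "K + sqrt (K\<^sup>2 + 2 * \<epsilon>) \<le> 2 * \<epsilon> * \<eta>" using assms(4) t(2) by simp
  then have "\<Delta> / (2 * \<epsilon>) * (K + sqrt (K\<^sup>2 + 2 * \<epsilon>)) \<le> \<Delta> / (2 * \<epsilon>) * (2 * \<epsilon> * \<eta>)"
    using assms(1,2) by (intro mult_left_mono) auto
  then show ?thesis using assms(2) by simp
qed

lemma mult_sqrt_div_square: "\<Delta> > 0 \<Longrightarrow> \<Delta> * sqrt (X / (\<Delta>\<^sup>2 * Y)) = sqrt (X / Y)"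
  by (simp add: real_sqrt_divide real_sqrt_mult)

lemma gaussian_noise_variance_le:
  fixes \<Delta> \<epsilon> K X T :: real
  defines "\<sigma> \<equiv> \<Delta> / (2 * \<epsilon>) * (K + sqrt (K\<^sup>2 + 2 * \<epsilon>))"
    and "\<eta> \<equiv> sqrt (X / (\<Delta>\<^sup>2 * T))"
  assumes \<Delta>: "\<Delta> > 0" and \<epsilon>: "\<epsilon> > 0" and K: "0 \<le> K" "K \<le> 9/2" and "X > 0" "T \<ge> 0"
    and eps: "1/8 * ((1 + sqrt (36 * \<eta> + 1)) / \<eta>)\<^sup>2 \<le> \<epsilon>"
  shows "\<sigma>\<^sup>2 * T \<le> X"
proof (cases "T = 0")
  case False
  with assms have "T > 0" "\<eta> > 0" by (simp_all add: \<eta>_def)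
  with gaussian_noise_le[OF \<Delta> \<epsilon> K _ eps] have "\<sigma> \<le> sqrt (X / T)"
    unfolding \<sigma>_def \<eta>_def mult_sqrt_div_square[OF \<Delta>] by simp
  moreover have "\<sigma> \<ge> 0" unfolding \<sigma>_def using \<Delta> \<epsilon> K by simp
  ultimately have "\<sigma>\<^sup>2 \<le> X / T" by (intro sqrt_ge_absD) simp
  then show ?thesis using \<open>T > 0\<close> by (simp add: le_divide_eq)
qed (use \<open>X > 0\<close> in simp)

lemma gaussian_noise_variance_ge:
  fixes \<Delta> \<epsilon> K X Y :: real
  defines "\<sigma> \<equiv> \<Delta> / (2 * \<epsilon>) * (K + sqrt (K\<^sup>2 + 2 * \<epsilon>))"
  assumes \<Delta>: "\<Delta> > 0" and \<epsilon>: "\<epsilon> > 0" and K: "1 \<le> K" and "Y > 0"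
    and eps: "\<epsilon> \<le> 1 / sqrt (X / (\<Delta>\<^sup>2 * Y))"
  shows "X \<le> \<sigma>\<^sup>2 * Y"
proof -
  have "0 < 1 / sqrt (X / (\<Delta>\<^sup>2 * Y))" using eps \<epsilon> by linarith
  then have "\<Delta> * sqrt (X / (\<Delta>\<^sup>2 * Y)) \<le> \<Delta> / \<epsilon>"
    using eps \<epsilon> \<Delta> by (simp add: field_simps)
  also have "\<dots> \<le> \<sigma>" unfolding \<sigma>_def using \<Delta> \<epsilon> K by (rule gaussian_noise_ge)
  finally have "X / Y \<le> \<sigma>\<^sup>2"
    unfolding mult_sqrt_div_square[OF \<Delta>] by (rule sqrt_le_D)
  then show ?thesis using \<open>Y > 0\<close> by (simp add: divide_le_eq)
qed

text \<open>Observability and controllability only guarantee that \<open>\<Sigma>\<close> exists and is unique;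
  the bounds hold for every positive semidefinite solution of the Riccati equation.\<close>
theorem theorem5:
  fixes H W C \<Sigma> :: "real^'n^'n" and D :: "real^'m^'n"
    and \<Delta> \<delta> \<epsilon> \<sigma> Bl Bu \<eta>1 \<eta>3 :: real
  assumes W_pd: "pos_def W"
    and C_diag: "diagonal_mat C" and C_nz: "\<forall>i. C $ i $ i \<noteq> 0"
    and obs: "observable H C"
    and W_D: "W = D ** transpose D" and ctrb: "controllable H D"
    and Delta_pos: "\<Delta> > 0"
    and delta_range: "1/100000 \<le> \<delta>" "\<delta> \<le> 1/10"
    and eps_pos: "\<epsilon> > 0"
    and sigma_def: "\<sigma> = \<Delta> / (2 * \<epsilon>) * (Qinv \<delta> + sqrt ((Qinv \<delta>)\<^sup>2 + 2 * \<epsilon>))"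
    and Sigma_psd: "pos_semidef \<Sigma>"
    and Sigma_dare: "dare H C ((\<sigma>\<^sup>2) *\<^sub>R mat 1) W \<Sigma>"
    and Bl_lo: "trace W < Bl"
    and Bl_hi: "Bl < trace W + trace (transpose H ** H) * min_eig W"
    and Bu: "Bu > trace W"
    and eta1_def: "\<eta>1 = sqrt (((Bl - trace W) * min_eig W * (C_up C)\<^sup>2) /
                       (\<Delta>\<^sup>2 * (trace (transpose H ** H) * min_eig W - Bl + trace W)))"
    and eta3_def: "\<eta>3 = sqrt (((Bu - trace W) * (C_low C)\<^sup>2) / (\<Delta>\<^sup>2 * trace (transpose H ** H)))"
  shows "(1/8 * ((1 + sqrt (36 * \<eta>3 + 1)) / \<eta>3)\<^sup>2 \<le> \<epsilon> \<longrightarrow> trace \<Sigma> \<le> Bu)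
       \<and> (\<epsilon> \<le> 1 / \<eta>1 \<longrightarrow> trace \<Sigma> \<ge> Bl)"
proof -
  have K: "1 \<le> Qinv \<delta>" "Qinv \<delta> \<le> 9/2" using Qinv_bounds[OF delta_range] by auto
  have "0 < \<Delta> / \<epsilon>" using Delta_pos eps_pos by simp
  also have "\<Delta> / \<epsilon> \<le> \<sigma>" unfolding sigma_def using Delta_pos eps_pos K(1) by (rule gaussian_noise_ge)
  finally have "\<sigma>\<^sup>2 > 0" by simp
  note dare_bound = Sigma_dare Sigma_psd this C_diag C_nz
  show ?thesis
  proof (intro conjI impI)
    assume eps: "1/8 * ((1 + sqrt (36 * \<eta>3 + 1)) / \<eta>3)\<^sup>2 \<le> \<epsilon>"
    obtain j where "C_low C = C$j$j" using C_low_diagonal_entry by blast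
    then have "(Bu - trace W) * (C_low C)\<^sup>2 > 0" using Bu C_nz by simp
    from gaussian_noise_variance_le[OF Delta_pos eps_pos _ K(2) this
        trace_transpose_mult_self_nonneg eps[unfolded eta3_def]] K(1)
    have "\<sigma>\<^sup>2 * trace (transpose H ** H) \<le> (Bu - trace W) * (C_low C)\<^sup>2"
      unfolding sigma_def by simp
    then show "trace \<Sigma> \<le> Bu" by (rule dare_trace_le_of_noise[OF dare_bound])
  next
    assume eps: "\<epsilon> \<le> 1 / \<eta>1"
    have "trace (transpose H ** H) * min_eig W - Bl + trace W > 0" using Bl_hi by simp
    from gaussian_noise_variance_ge[OF Delta_pos eps_pos K(1) this eps[unfolded eta1_def]]
    have "(Bl - trace W) * min_eig W * (C_up C)\<^sup>2
        \<le> \<sigma>\<^sup>2 * (trace (transpose H ** H) * min_eig W - Bl + trace W)"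
      unfolding sigma_def .
    moreover have "sym_mat W" using W_pd by (simp add: pos_def_def)
    ultimately show "Bl \<le> trace \<Sigma>" by (intro dare_trace_ge_of_noise[OF dare_bound _ Bl_lo Bl_hi])
  qed
qed

end
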